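(* Let $\beta_1,\beta_2,\beta_3$ be pairwise distinct with $|\beta_3-\beta_1|<|\beta_3-\beta_2|$, and assume $\alpha_3-\alpha_1\in\mathbb{Z}_{\le-4}$ and $\alpha_2-\alpha_1\notin\mathbb{Z}_{\ge-1}$. Let $c_n=(-1)^n\frac{(\alpha_1-\alpha_2-1)^{(n)}}{(\beta_3-\beta_2)^n}$, $\tilde F(\alpha;\beta;n)=\sum_{p\ge0}\frac{(\alpha_1-\alpha_2-1+n)^{(p)}}{(1+n)^{(p)}}\big(\frac{\beta_3-\beta_1}{\beta_3-\beta_2}\big)^p$ and $\hat\phi(x)=\sum_{n\ge0}(c_n\tilde F(\alpha;\beta;n)-c_n)x^n$. Then $\hat\phi$ is 1-summable, and for every direction $\theta\notin\{\arg(\beta_1-\beta_3),\arg(\beta_2-\beta_3)\}$ its 1-sum in direction $\theta$ is $$\phi_\theta(x)=\Big(\frac{\beta_1-\beta_2}{\beta_3-\beta_2}\Big)^{\alpha_2-\alpha_1+1}\int_0^{+\infty e^{i\theta}}\Big(1+\frac{\xi}{\beta_3-\beta_1}\Big)^{-1}e^{-\xi/x}d\Big(\frac{\xi}{x}\Big)-\int_0^{+\infty e^{i\theta}}\Big(1+\frac{\xi}{\beta_3-\beta_2}\Big)^{1+\alpha_2-\alpha_1}\Big(1+\frac{\xi}{\beta_3-\beta_1}\Big)^{-1}e^{-\xi/x}d\Big(\frac{\xi}{x}\Big).$$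
   Context: $(a)^{(n)}=a(a+1)\cdots(a+n-1)$, $(a)^{(0)}=1$; complex powers use the principal branch. 1-summability and 1-sum in direction $\theta$ are in the Borel–Laplace sense: the 1-sum is $\int_0^{+\infty e^{i\theta}}h(\zeta)e^{-\zeta/x}d(\zeta/x)$ with $h$ the analytic continuation (of at most exponential growth) of the formal Borel transform $\sum f_n\zeta^n/n!$ of the series $\sum f_nx^n$. *)

theory Defs
  imports "HOL-Analysis.Analysis"
begin

definition open_sector :: "real \<Rightarrow> real \<Rightarrow> complex set" where
  "open_sector \<theta> \<delta> = {\<xi>. \<xi> \<noteq> 0 \<and> (\<exists>\<phi>. \<bar>\<phi> - \<theta>\<bar> < \<delta> \<and> \<xi> = of_real (norm \<xi>) * cis \<phi>)}"

text \<open>h is the analytic continuation of the formal Borel transform of the series with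
  coefficients f (sum f_n zeta^n / n!) to a disc around 0 union an open sector around the
  direction theta, with exponential growth bound A exp(B |zeta|) on that sector.\<close>
definition borel_cont ::
  "(nat \<Rightarrow> complex) \<Rightarrow> real \<Rightarrow> (complex \<Rightarrow> complex) \<Rightarrow> real \<Rightarrow> real \<Rightarrow> bool" where
  "borel_cont f \<theta> h A B \<longleftrightarrow>
     (\<exists>r \<delta>. r > 0 \<and> \<delta> > 0 \<and>
        (\<forall>\<zeta>\<in>ball 0 r. (\<lambda>n. f n * \<zeta> ^ n / fact n) sums h \<zeta>) \<and>
        h holomorphic_on (ball 0 r \<union> open_sector \<theta> \<delta>) \<and>
        (\<forall>\<xi>\<in>open_sector \<theta> \<delta>. norm (h \<xi>) \<le> A * exp (B * norm \<xi>)))"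

definition one_summable_dir :: "(nat \<Rightarrow> complex) \<Rightarrow> real \<Rightarrow> bool" where
  "one_summable_dir f \<theta> \<longleftrightarrow> (\<exists>h A B. borel_cont f \<theta> h A B)"

text \<open>1-summable: 1-summable in every direction except finitely many (directions given by
  unit complex numbers cis theta).\<close>
definition one_summable :: "(nat \<Rightarrow> complex) \<Rightarrow> bool" where
  "one_summable f \<longleftrightarrow> (\<exists>E. finite E \<and> (\<forall>\<theta>. cis \<theta> \<notin> E \<longrightarrow> one_summable_dir f \<theta>))"

text \<open>Integrand of int_0^{+infinity e^{i theta}} g(xi) e^{-xi/x} d(xi/x), parametrised by xi = t e^{i theta}.\<close>
definition laplace_kernel :: "(complex \<Rightarrow> complex) \<Rightarrow> real \<Rightarrow> complex \<Rightarrow> real \<Rightarrow> complex" where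
  "laplace_kernel g \<theta> x t = g (of_real t * cis \<theta>) * exp (- (of_real t * cis \<theta>) / x) * (cis \<theta> / x)"

definition laplace_dir :: "(complex \<Rightarrow> complex) \<Rightarrow> real \<Rightarrow> complex \<Rightarrow> complex" where
  "laplace_dir g \<theta> x = integral {0..} (laplace_kernel g \<theta> x)"

text \<open>g is the 1-sum in direction theta of the series with coefficients f: on the region
  Re(e^{i theta}/x) > B where the Laplace integral of the continued Borel transform converges.\<close>
definition is_one_sum_dir :: "(nat \<Rightarrow> complex) \<Rightarrow> real \<Rightarrow> (complex \<Rightarrow> complex) \<Rightarrow> bool" where
  "is_one_sum_dir f \<theta> g \<longleftrightarrow>
     (\<exists>h A B. borel_cont f \<theta> h A B \<and>
        (\<forall>x. x \<noteq> 0 \<and> Re (cis \<theta> / x) > B \<longrightarrow>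
             (laplace_kernel h \<theta> x has_integral g x) {0..}))"

end

theory Submission
  imports Defs
begin

text \<open>Put \<open>a = \<alpha>1 - \<alpha>2 - 1\<close>, \<open>b = \<beta>3 - \<beta>2\<close>, \<open>d = \<beta>3 - \<beta>1\<close> and \<open>r = d/b\<close>, so that \<open>|r| < 1\<close>.
  The identities \<open>(a)\<^sub>n\<^sub>+\<^sub>p = (a)\<^sub>n (a+n)\<^sub>p\<close> and \<open>(n+p)! = n! (1+n)\<^sub>p\<close> show that \<open>c\<^sub>n F(\<alpha>;\<beta>;n)\<close> is
  \<open>n! (-1/d)\<^sup>n\<close> times the tail \<open>\<Sum>m\<ge>n. (a)\<^sub>m r\<^sup>m / m!\<close> of the binomial series of \<open>(1 - r) powr -a\<close>.
  Hence the Borel transform of \<open>\<phi>hat\<close> is the Cauchy product of the geometric series of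
  \<open>1 / (1 + \<zeta>/d)\<close> with the binomial series of \<open>(1 + \<zeta>/b) powr -a\<close>, namely
  \<open>((1 - d/b) powr -a - (1 + \<zeta>/b) powr -a) / (1 + \<zeta>/d)\<close>, which is singular only on the rays
  through \<open>-d\<close> and \<open>-b\<close>. In a thin sector around any other direction \<open>|1 + \<zeta>/d|\<close> and \<open>|1 + \<zeta>/b|\<close>
  stay bounded below and \<open>|(1 + \<zeta>/b) powr -a| \<le> C exp (|a| |\<zeta>| / |b|)\<close>, so the Laplace integral
  converges and splits into the two integrals of the statement.\<close>

section \<open>Binomial series and the coefficients of \<open>\<phi>hat\<close>\<close>

lemma pochhammer_binomial_sums:
  fixes a w :: complex
  assumes "norm w < 1"
  shows "(\<lambda>n. pochhammer a n / fact n * w ^ n) sums (1 - w) powr (-a)"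
proof -
  have "((-a) gchoose n) * (-w) ^ n = pochhammer a n / fact n * w ^ n" for n
  proof -
    have "((-1::complex) ^ n) * (-1) ^ n = (-1) ^ (2 * n)" by (simp only: mult_2 power_add)
    then have "((-1::complex) ^ n) * (-1) ^ n = 1" by simp
    then show ?thesis unfolding gbinomial_pochhammer power_minus[of w n] by (simp add: mult_ac)
  qed
  moreover have "(\<lambda>n. ((-a) gchoose n) * (-w) ^ n) sums (1 + -w) powr (-a)"
    using assms by (intro gen_binomial_complex) simp
  ultimately show ?thesis by simp
qed

lemma pochhammer_binomial_summable_norm:
  fixes a w :: complex
  assumes "norm w < 1"
  shows "summable (\<lambda>n. norm (pochhammer a n / fact n * w ^ n))"
proof -
  define x where "x = complex_of_real ((1 + norm w) / 2)"
  have "norm x = (1 + norm w) / 2" unfolding x_def norm_of_real by simp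
  then have "norm x < 1" "norm w < norm x" using assms by auto
  then show ?thesis by (rule powser_insidea[OF sums_summable[OF pochhammer_binomial_sums]])
qed

lemma hypergeometric_as_binomial_tail:
  fixes a b d :: complex and N :: nat
  assumes b: "b \<noteq> 0" and d: "d \<noteq> 0" and nd: "norm d < norm b"
    and a: "\<And>k::nat. a \<noteq> - of_nat k"
  defines "c \<equiv> (-1) ^ N * pochhammer a N / b ^ N"
  shows "c * (\<Sum>p. pochhammer (a + of_nat N) p / pochhammer (1 + of_nat N) p * (d / b) ^ p) - c
       = fact N * (-1 / d) ^ N * ((1 - d / b) powr (-a) - (\<Sum>m\<le>N. pochhammer a m / fact m * (d / b) ^ m))"
proof -
  define r where "r = d / b"
  define K where "K = (1 - r) powr (-a)"
  define t where "t m = pochhammer a m / fact m * r ^ m" for m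
  define F where "F = fact N * (-1 / d) ^ N"
  have "norm r < 1" using nd b by (simp add: r_def norm_divide)
  then have "(\<lambda>p. t (p + N)) sums (K - (\<Sum>m<N. t m))"
    using pochhammer_binomial_sums unfolding t_def K_def by (subst sums_iff_shift) simp
  then have tail: "(\<lambda>p. F * t (p + N)) sums (F * (K - (\<Sum>m<N. t m)))" by (rule sums_mult)
  have c0: "c \<noteq> 0" using a b by (auto simp: c_def pochhammer_eq_0_iff)
  have dN: "d ^ N * (-(1 / d)) ^ N = (-1) ^ N" using d by (simp flip: power_mult_distrib)
  have c_eq: "c = F * t N" unfolding c_def F_def t_def r_def using d dN by (simp add: field_simps power_divide)
  have "c * (pochhammer (a + of_nat N) p / pochhammer (1 + of_nat N) p * r ^ p) = F * t (p + N)" for p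
  proof -
    have P1: "pochhammer a (N + p) = pochhammer a N * pochhammer (a + of_nat N) p" by (rule pochhammer_product')
    have P2: "(fact (N + p) :: complex) = fact N * pochhammer (1 + of_nat N) p"
      using pochhammer_product'[of "1::complex" N p] by (simp add: pochhammer_fact add.commute)
    have P3: "pochhammer (1 + of_nat N) p \<noteq> (0::complex)" using P2 by (metis fact_nonzero mult_zero_right)
    have rN: "r ^ N = d ^ N / b ^ N" by (simp add: r_def power_divide)
    show ?thesis
      unfolding c_def F_def t_def P1 add.commute[of p N] P2 power_add rN
      using b d P3 dN by (simp add: field_simps power_divide)
  qed
  then have "(\<lambda>p. c * (pochhammer (a + of_nat N) p / pochhammer (1 + of_nat N) p * r ^ p))
      sums (F * (K - (\<Sum>m<N. t m)))" using tail by simp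
  then have "(\<lambda>p. pochhammer (a + of_nat N) p / pochhammer (1 + of_nat N) p * r ^ p)
      sums (F * (K - (\<Sum>m<N. t m)) / c)"
    using sums_divide[of _ _ c] c0 by fastforce
  then have "c * (\<Sum>p. pochhammer (a + of_nat N) p / pochhammer (1 + of_nat N) p * r ^ p)
      = F * (K - (\<Sum>m<N. t m))"
    using c0 by (simp add: sums_iff)
  moreover have "(\<Sum>m\<le>N. t m) = (\<Sum>m<N. t m) + t N"
    using sum.lessThan_Suc[of t N] by (simp only: lessThan_Suc_atMost)
  ultimately show ?thesis
    unfolding r_def[symmetric] K_def[symmetric] t_def[symmetric] F_def[symmetric]
    by (simp add: c_eq algebra_simps)
qed

lemma borel_transform_binomial_tail:
  fixes a b d \<zeta> :: complex
  assumes b: "b \<noteq> 0" and d: "d \<noteq> 0" and nd: "norm d < norm b" and \<zeta>: "norm \<zeta> < norm d"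
  defines "K \<equiv> (1 - d / b) powr (-a)"
  shows "(\<lambda>N. fact N * (-1 / d) ^ N * (K - (\<Sum>m\<le>N. pochhammer a m / fact m * (d / b) ^ m)) * \<zeta> ^ N / fact N)
     sums (K * inverse (1 + \<zeta> / d) - (1 + \<zeta> / b) powr (-a) * inverse (1 + \<zeta> / d))"
proof -
  define u where "u = -\<zeta> / d"
  define w where "w = -\<zeta> / b"
  define s where "s = (\<lambda>m. pochhammer a m / fact m * w ^ m)"
  have nu: "norm u < 1" using \<zeta> d by (simp add: u_def norm_divide)
  have nw: "norm w < 1" using \<zeta> nd b by (simp add: w_def norm_divide)
  have "fact N * (-1 / d) ^ N * (K - (\<Sum>m\<le>N. pochhammer a m / fact m * (d / b) ^ m)) * \<zeta> ^ N / fact N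
      = K * u ^ N - (\<Sum>m\<le>N. s m * u ^ (N - m))" for N
  proof -
    have "u ^ N * (pochhammer a m / fact m * (d / b) ^ m) = s m * u ^ (N - m)" if "m \<le> N" for m
    proof -
      have "u ^ N = u ^ m * u ^ (N - m)" using that by (simp flip: power_add)
      moreover have "(d / b) ^ m * u ^ m = w ^ m" using d by (simp add: u_def w_def flip: power_mult_distrib)
      ultimately show ?thesis unfolding s_def by (simp add: mult_ac)
    qed
    then have "u ^ N * (\<Sum>m\<le>N. pochhammer a m / fact m * (d / b) ^ m) = (\<Sum>m\<le>N. s m * u ^ (N - m))"
      unfolding sum_distrib_left by (intro sum.cong) auto
    moreover have scale: "fact N * (-1 / d) ^ N * X * \<zeta> ^ N / fact N = u ^ N * X" for X
      by (simp add: u_def power_mult_distrib[symmetric] field_simps)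
    ultimately show ?thesis unfolding scale by (simp add: algebra_simps)
  qed
  moreover have geom: "(\<lambda>N. u ^ N) sums inverse (1 + \<zeta> / d)"
    using geometric_sums[OF nu] by (simp add: u_def divide_inverse)
  moreover have binom: "s sums (1 + \<zeta> / b) powr (-a)"
    using pochhammer_binomial_sums[OF nw, of a] by (simp add: s_def w_def)
  moreover have "(\<lambda>N. \<Sum>m\<le>N. s m * u ^ (N - m)) sums ((\<Sum>m. s m) * (\<Sum>N. u ^ N))"
    by (rule Cauchy_product_sums)
      (use pochhammer_binomial_summable_norm[OF nw, of a] summable_geometric[of "norm u"] nu
        in \<open>auto simp: s_def norm_power\<close>)
  ultimately show ?thesis
    by (simp add: sums_unique[OF geom, symmetric] sums_unique[OF binom, symmetric] sums_diff sums_mult)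
qed

section \<open>Sectors avoiding the singular directions\<close>

lemma chord_ineq:
  fixes c t \<rho> :: real
  assumes "-1 \<le> c" "c \<le> 1" "0 \<le> t" "0 \<le> \<rho>"
  shows "\<rho>\<^sup>2 * (1 - c) / 2 \<le> t\<^sup>2 + \<rho>\<^sup>2 - 2 * t * \<rho> * c"
proof (cases "c \<ge> 0")
  case True
  have "t\<^sup>2 + \<rho>\<^sup>2 - 2 * t * \<rho> * c - \<rho>\<^sup>2 * (1 - c) / 2 = (t - \<rho> * c)\<^sup>2 + \<rho>\<^sup>2 * (1 - c) * (1 + 2 * c) / 2"
    by (simp add: power2_eq_square field_simps)
  moreover have "0 \<le> \<rho>\<^sup>2 * (1 - c) * (1 + 2 * c) / 2" using True assms by simp
  ultimately show ?thesis by (smt (verit) zero_le_power2)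
next
  case False
  then have "2 * t * \<rho> * c \<le> 0" using assms by (simp add: mult_nonneg_nonpos)
  moreover have "\<rho>\<^sup>2 * (1 - c) \<le> \<rho>\<^sup>2 * 2" using assms by (intro mult_left_mono) auto
  ultimately show ?thesis using zero_le_power2[of t] by linarith
qed

lemma half_chord_le_norm_diff:
  fixes w s :: complex and t \<rho> :: real
  assumes "norm w = 1" "norm s = 1" "0 \<le> t" "0 \<le> \<rho>"
  shows "\<rho> * norm (w - s) / 2 \<le> norm (of_real t * w - of_real \<rho> * s)"
proof -
  define c where "c = Re (w * cnj s)"
  have w: "(Re w)\<^sup>2 + (Im w)\<^sup>2 = 1" and s: "(Re s)\<^sup>2 + (Im s)\<^sup>2 = 1"
    using assms(1,2) by (metis cmod_power2 power_one)+
  have "\<bar>c\<bar> \<le> 1" using abs_Re_le_cmod[of "w * cnj s"] assms by (simp add: c_def norm_mult)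
  then have c: "-1 \<le> c" "c \<le> 1" by linarith+
  have "(norm (w - s))\<^sup>2 = 2 - 2 * c"
    using w s by (simp add: c_def cmod_power2 power2_diff algebra_simps)
  then have "(\<rho> * norm (w - s) / 2)\<^sup>2 = \<rho>\<^sup>2 * (1 - c) / 2"
    by (simp add: power_mult_distrib power_divide)
  also have "\<dots> \<le> t\<^sup>2 + \<rho>\<^sup>2 - 2 * t * \<rho> * c" by (rule chord_ineq[OF c assms(3,4)])
  also have "\<dots> = (norm (of_real t * w - of_real \<rho> * s))\<^sup>2"
  proof -
    have "t\<^sup>2 * ((Re w)\<^sup>2 + (Im w)\<^sup>2) + \<rho>\<^sup>2 * ((Re s)\<^sup>2 + (Im s)\<^sup>2) - 2 * t * \<rho> * c
        = (norm (of_real t * w - of_real \<rho> * s))\<^sup>2"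
      by (simp add: c_def cmod_power2 power2_diff power_mult_distrib algebra_simps)
    then show ?thesis using w s by simp
  qed
  finally show ?thesis by (rule power2_le_imp_le) simp
qed

lemma norm_one_plus_ray_div_ge:
  fixes d :: complex and t :: real
  assumes "d \<noteq> 0" "0 \<le> t"
  shows "norm (cis \<phi> - sgn (-d)) / 2 \<le> norm (1 + of_real t * cis \<phi> / d)"
proof -
  have "norm d * norm (cis \<phi> - sgn (-d)) / 2 \<le> norm (of_real t * cis \<phi> - of_real (norm d) * sgn (-d))"
    using assms by (intro half_chord_le_norm_diff) (auto simp: norm_sgn)
  moreover have "1 + of_real t * cis \<phi> / d = (of_real t * cis \<phi> - of_real (norm d) * sgn (-d)) / d"
    using assms(1) by (simp add: sgn_eq field_simps)
  ultimately show ?thesis using assms(1) by (simp add: norm_divide field_simps)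
qed

lemma one_plus_ray_div_notin_nonpos_Reals:
  fixes b :: complex and t :: real
  assumes "b \<noteq> 0" "0 \<le> t" "cis \<phi> \<noteq> sgn (-b)"
  shows "1 + of_real t * cis \<phi> / b \<notin> \<real>\<^sub>\<le>\<^sub>0"
proof
  assume "1 + of_real t * cis \<phi> / b \<in> \<real>\<^sub>\<le>\<^sub>0"
  then obtain q where q: "1 + of_real t * cis \<phi> / b = of_real q" "q \<le> 0" by (rule nonpos_Reals_cases)
  then have ray: "of_real t * cis \<phi> = of_real (1 - q) * (-b)" using assms(1) by (simp add: field_simps)
  then have "t \<noteq> 0" using q(2) assms(1) by auto
  then have "cis \<phi> = sgn (of_real t * cis \<phi>)" using assms(2) by (simp add: sgn_mult sgn_of_real)
  also have "\<dots> = sgn (-b)" using q(2) unfolding ray sgn_mult sgn_of_real by simp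
  finally show False using assms(3) by simp
qed

lemma cis_avoids_near:
  assumes "cis \<theta> \<noteq> s\<^sub>1" "cis \<theta> \<noteq> s\<^sub>2"
  obtains \<delta> \<eta> where "\<delta> > 0" "\<eta> > 0"
    "\<And>\<phi>. \<bar>\<phi> - \<theta>\<bar> < \<delta> \<Longrightarrow> \<eta> \<le> norm (cis \<phi> - s\<^sub>1) \<and> \<eta> \<le> norm (cis \<phi> - s\<^sub>2)"
proof -
  define \<eta> where "\<eta> = min (norm (cis \<theta> - s\<^sub>1)) (norm (cis \<theta> - s\<^sub>2)) / 2"
  have \<eta>: "\<eta> > 0" using assms unfolding \<eta>_def by auto
  have "isCont cis \<theta>"
    using continuous_on_cis[OF continuous_on_id, of UNIV] by (simp add: continuous_on_eq_continuous_at)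
  then obtain \<delta> where \<delta>: "\<delta> > 0" "\<And>\<phi>. dist \<phi> \<theta> < \<delta> \<Longrightarrow> dist (cis \<phi>) (cis \<theta>) < \<eta>"
    unfolding continuous_at_eps_delta using \<eta> by blast
  show ?thesis
  proof (rule that[OF \<delta>(1) \<eta>])
    fix \<phi> assume "\<bar>\<phi> - \<theta>\<bar> < \<delta>"
    then have "norm (cis \<phi> - cis \<theta>) < \<eta>" using \<delta>(2)[of \<phi>] by (simp add: dist_norm dist_real_def)
    moreover have tri: "norm (cis \<theta> - s) \<le> norm (cis \<phi> - s) + norm (cis \<phi> - cis \<theta>)" for s
      using norm_triangle_ineq4[of "cis \<phi> - s" "cis \<phi> - cis \<theta>"] by simp
    ultimately show "\<eta> \<le> norm (cis \<phi> - s\<^sub>1) \<and> \<eta> \<le> norm (cis \<phi> - s\<^sub>2)"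
      using tri[of s\<^sub>1] tri[of s\<^sub>2] unfolding \<eta>_def by linarith
  qed
qed

lemma sector_avoiding_poles:
  fixes b d :: complex
  assumes "b \<noteq> 0" "d \<noteq> 0" "cis \<theta> \<noteq> sgn (-d)" "cis \<theta> \<noteq> sgn (-b)"
  obtains \<delta> \<eta> where "\<delta> > 0" "\<eta> > 0"
    "\<And>t \<phi>. 0 \<le> t \<Longrightarrow> \<bar>\<phi> - \<theta>\<bar> < \<delta> \<Longrightarrow>
       \<eta> \<le> norm (1 + of_real t * cis \<phi> / d) \<and> \<eta> \<le> norm (1 + of_real t * cis \<phi> / b) \<and>
       1 + of_real t * cis \<phi> / b \<notin> \<real>\<^sub>\<le>\<^sub>0"
proof -
  obtain \<delta> \<eta> where \<delta>: "\<delta> > 0" and \<eta>: "\<eta> > 0"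
    and near: "\<And>\<phi>. \<bar>\<phi> - \<theta>\<bar> < \<delta> \<Longrightarrow> \<eta> \<le> norm (cis \<phi> - sgn (-d)) \<and> \<eta> \<le> norm (cis \<phi> - sgn (-b))"
    using cis_avoids_near[OF assms(3,4)] by blast
  show ?thesis
  proof (rule that[OF \<delta>, of "\<eta> / 2"])
    fix t \<phi> :: real assume t: "0 \<le> t" and \<phi>: "\<bar>\<phi> - \<theta>\<bar> < \<delta>"
    have "cis \<phi> \<noteq> sgn (-b)" using near[OF \<phi>] \<eta> by auto
    then show "\<eta> / 2 \<le> norm (1 + of_real t * cis \<phi> / d) \<and> \<eta> / 2 \<le> norm (1 + of_real t * cis \<phi> / b) \<and>
       1 + of_real t * cis \<phi> / b \<notin> \<real>\<^sub>\<le>\<^sub>0"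
      using near[OF \<phi>] norm_one_plus_ray_div_ge[OF assms(1) t, of \<phi>] norm_one_plus_ray_div_ge[OF assms(2) t, of \<phi>]
        one_plus_ray_div_notin_nonpos_Reals[OF assms(1) t] by auto
  qed (use \<eta> in simp)
qed

lemma binomial_factors_holomorphic:
  fixes b d p :: complex
  assumes "norm d < norm b"
    and sector: "\<And>t \<phi>. 0 \<le> t \<Longrightarrow> \<bar>\<phi> - \<theta>\<bar> < \<delta> \<Longrightarrow>
       1 + of_real t * cis \<phi> / d \<noteq> 0 \<and> 1 + of_real t * cis \<phi> / b \<notin> \<real>\<^sub>\<le>\<^sub>0"
  shows "(\<lambda>\<xi>. inverse (1 + \<xi> / d)) holomorphic_on ball 0 (norm d) \<union> open_sector \<theta> \<delta>"
    and "(\<lambda>\<xi>. (1 + \<xi> / b) powr p * inverse (1 + \<xi> / d)) holomorphic_on ball 0 (norm d) \<union> open_sector \<theta> \<delta>"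
proof -
  have "1 + \<xi> / d \<noteq> 0 \<and> 1 + \<xi> / b \<notin> \<real>\<^sub>\<le>\<^sub>0" if \<xi>: "\<xi> \<in> ball 0 (norm d) \<union> open_sector \<theta> \<delta>" for \<xi>
  proof (cases "\<xi> \<in> ball 0 (norm d)")
    case True
    then have "norm (\<xi> / d) < 1" "norm (\<xi> / b) < 1"
      using assms(1) by (auto simp: norm_divide divide_less_eq)
    moreover have "Re (1 + \<xi> / b) > 0" if "norm (\<xi> / b) < 1"
      using abs_Re_le_cmod[of "\<xi> / b"] that by simp
    moreover have "1 + \<xi> / d \<noteq> 0" if "norm (\<xi> / d) < 1"
      using that by (metis add_eq_0_iff norm_minus_cancel norm_one order.irrefl)
    ultimately show ?thesis by (auto simp: complex_nonpos_Reals_iff)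
  next
    case False
    then obtain \<phi> where "\<bar>\<phi> - \<theta>\<bar> < \<delta>" "\<xi> = of_real (norm \<xi>) * cis \<phi>"
      using \<xi> unfolding open_sector_def by blast
    then show ?thesis using sector[of "norm \<xi>" \<phi>] by simp
  qed
  then show "(\<lambda>\<xi>. inverse (1 + \<xi> / d)) holomorphic_on ball 0 (norm d) \<union> open_sector \<theta> \<delta>"
    and "(\<lambda>\<xi>. (1 + \<xi> / b) powr p * inverse (1 + \<xi> / d)) holomorphic_on ball 0 (norm d) \<union> open_sector \<theta> \<delta>"
    by (auto intro!: holomorphic_intros)
qed

lemma norm_powr_le_exp:
  fixes z p :: complex and \<eta> s :: real
  assumes "0 < \<eta>" "\<eta> \<le> norm z" "norm z \<le> 1 + s" "0 \<le> s"
  shows "norm (z powr p) \<le> exp (norm p * (\<bar>ln \<eta>\<bar> + pi)) * exp (norm p * s)"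
proof -
  have z: "z \<noteq> 0" using assms by auto
  have "ln (norm z) \<le> s" using ln_le_minus_one[of "norm z"] z assms(3) by simp
  moreover have "ln \<eta> \<le> ln (norm z)" using assms(1,2) z by (subst ln_le_cancel_iff) auto
  ultimately have "\<bar>ln (norm z)\<bar> \<le> s + \<bar>ln \<eta>\<bar>" using assms(4) by linarith
  moreover have "norm (ln z) \<le> \<bar>ln (norm z)\<bar> + pi"
    using cmod_le[of "ln z"] mpi_less_Im_Ln[of z] Im_Ln_le_pi[of z] z by simp
  ultimately have ln_bound: "norm (p * ln z) \<le> norm p * (s + \<bar>ln \<eta>\<bar> + pi)"
    unfolding norm_mult by (intro mult_left_mono) auto
  have "norm (z powr p) = exp (Re (p * ln z))" using z by (simp add: powr_def)
  also have "\<dots> \<le> exp (norm p * (s + \<bar>ln \<eta>\<bar> + pi))"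
    using complex_Re_le_cmod[of "p * ln z"] ln_bound by simp
  also have "\<dots> = exp (norm p * (\<bar>ln \<eta>\<bar> + pi)) * exp (norm p * s)"
    by (simp add: exp_add[symmetric] algebra_simps)
  finally show ?thesis .
qed

lemma binomial_factors_bound:
  fixes a b d \<xi> :: complex and \<eta> :: real
  assumes \<eta>: "0 < \<eta>" and far: "\<eta> \<le> norm (1 + \<xi> / d)" "\<eta> \<le> norm (1 + \<xi> / b)"
  defines "M \<equiv> exp (norm a * (\<bar>ln \<eta>\<bar> + pi)) / \<eta> * exp (norm a / norm b * norm \<xi>)"
  shows "norm (inverse (1 + \<xi> / d)) \<le> M"
    and "norm ((1 + \<xi> / b) powr (-a) * inverse (1 + \<xi> / d)) \<le> M"
proof -
  define E where "E = exp (norm a * (\<bar>ln \<eta>\<bar> + pi)) * exp (norm a * (norm \<xi> / norm b))"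
  have M: "M = E / \<eta>" by (simp add: M_def E_def)
  have "norm (1 + \<xi> / b) \<le> 1 + norm \<xi> / norm b"
    using norm_triangle_ineq[of 1 "\<xi> / b"] by (simp add: norm_divide)
  then have powr_le: "norm ((1 + \<xi> / b) powr (-a)) \<le> E"
    using norm_powr_le_exp[OF \<eta> far(2), of "norm \<xi> / norm b" "-a"] by (simp add: E_def)
  have inverse_le: "norm (inverse (1 + \<xi> / d)) \<le> 1 / \<eta>"
    using le_imp_inverse_le[OF far(1) \<eta>] by (simp add: norm_inverse norm_divide inverse_eq_divide)
  have "0 \<le> norm a * (\<bar>ln \<eta>\<bar> + pi) + norm a * (norm \<xi> / norm b)" using pi_gt_zero by simp
  then have E_ge: "1 \<le> E" unfolding E_def exp_add[symmetric] by simp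
  show "norm (inverse (1 + \<xi> / d)) \<le> M"
    unfolding M using E_ge inverse_le \<eta> by (meson divide_right_mono less_imp_le order_trans)
  show "norm ((1 + \<xi> / b) powr (-a) * inverse (1 + \<xi> / d)) \<le> M"
    unfolding M norm_mult using mult_mono[OF powr_le inverse_le] E_ge by simp
qed

section \<open>Borel--Laplace summation\<close>

lemma laplace_kernel_integrable:
  fixes g :: "complex \<Rightarrow> complex" and x :: complex
  assumes cont: "continuous_on {0..} (\<lambda>t. g (of_real t * cis \<theta>))"
    and bound: "\<And>t. 0 \<le> t \<Longrightarrow> norm (g (of_real t * cis \<theta>)) \<le> M * exp (B * t)"
    and x: "x \<noteq> 0" and re: "B < Re (cis \<theta> / x)"
  shows "laplace_kernel g \<theta> x integrable_on {0..}"
proof -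
  define c where "c = Re (cis \<theta> / x)"
  have "continuous_on {0..} (laplace_kernel g \<theta> x)"
    unfolding laplace_kernel_def using x by (intro continuous_intros cont) auto
  then have meas: "laplace_kernel g \<theta> x \<in> borel_measurable (lebesgue_on {0..})"
    by (rule continuous_imp_measurable_on_sets_lebesgue) simp
  have majorant: "(\<lambda>t. (M * norm (cis \<theta> / x)) * exp (-(c - B) * t)) integrable_on {0..}"
    using has_integral_mult_right[OF has_integral_exp_minus_to_infinity[of "c - B" 0], of "M * norm (cis \<theta> / x)"] re
    unfolding c_def integrable_on_def by auto
  have "norm (laplace_kernel g \<theta> x t) \<le> (M * norm (cis \<theta> / x)) * exp (-(c - B) * t)" if "t \<in> {0..}" for t
  proof -
    have Re_scale: "Re (of_real r * z) = r * Re z" for r z by simp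
    have ray: "- (of_real t * cis \<theta>) / x = of_real (- t) * (cis \<theta> / x)" by simp
    have "Re (- (of_real t * cis \<theta>) / x) = - t * c" unfolding ray Re_scale c_def ..
    then have "norm (laplace_kernel g \<theta> x t) = norm (g (of_real t * cis \<theta>)) * exp (- t * c) * norm (cis \<theta> / x)"
      unfolding laplace_kernel_def norm_mult norm_exp_eq_Re by simp
    also have "\<dots> \<le> M * exp (B * t) * exp (- t * c) * norm (cis \<theta> / x)"
      using bound that by (intro mult_right_mono) auto
    also have "\<dots> = (M * norm (cis \<theta> / x)) * exp (-(c - B) * t)"
      by (simp add: exp_add[symmetric] algebra_simps)
    finally show ?thesis .
  qed
  then have "laplace_kernel g \<theta> x absolutely_integrable_on {0..}"
    by (intro measurable_bounded_by_integrable_imp_absolutely_integrable[OF meas _ majorant]) auto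
  then show ?thesis using set_lebesgue_integral_eq_integral(1) by blast
qed

lemma is_one_sum_dir_lincomb:
  assumes "borel_cont f \<theta> (\<lambda>\<xi>. K * g\<^sub>1 \<xi> - g\<^sub>2 \<xi>) A B"
    and "continuous_on {0..} (\<lambda>t. g\<^sub>1 (of_real t * cis \<theta>))" "continuous_on {0..} (\<lambda>t. g\<^sub>2 (of_real t * cis \<theta>))"
    and "\<And>t. 0 \<le> t \<Longrightarrow> norm (g\<^sub>1 (of_real t * cis \<theta>)) \<le> M * exp (B * t)"
    and "\<And>t. 0 \<le> t \<Longrightarrow> norm (g\<^sub>2 (of_real t * cis \<theta>)) \<le> M * exp (B * t)"
  shows "is_one_sum_dir f \<theta> (\<lambda>x. K * laplace_dir g\<^sub>1 \<theta> x - laplace_dir g\<^sub>2 \<theta> x)"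
proof -
  have "(laplace_kernel (\<lambda>\<xi>. K * g\<^sub>1 \<xi> - g\<^sub>2 \<xi>) \<theta> x has_integral K * laplace_dir g\<^sub>1 \<theta> x - laplace_dir g\<^sub>2 \<theta> x) {0..}"
    if "x \<noteq> 0" "B < Re (cis \<theta> / x)" for x
  proof -
    have "laplace_kernel (\<lambda>\<xi>. K * g\<^sub>1 \<xi> - g\<^sub>2 \<xi>) \<theta> x = (\<lambda>t. K * laplace_kernel g\<^sub>1 \<theta> x t - laplace_kernel g\<^sub>2 \<theta> x t)"
      by (auto simp: laplace_kernel_def algebra_simps)
    then show ?thesis
      unfolding laplace_dir_def using assms(2-5) that
      by (auto intro!: has_integral_diff has_integral_mult_right integrable_integral laplace_kernel_integrable)
  qed
  then show ?thesis using assms(1) unfolding is_one_sum_dir_def by blast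
qed

lemma borel_contI:
  assumes "0 < r" "0 < \<delta>"
    and "\<And>\<zeta>. \<zeta> \<in> ball 0 r \<Longrightarrow> (\<lambda>n. f n * \<zeta> ^ n / fact n) sums h \<zeta>"
    and "h holomorphic_on ball 0 r \<union> open_sector \<theta> \<delta>"
    and "\<And>t \<phi>. 0 \<le> t \<Longrightarrow> \<bar>\<phi> - \<theta>\<bar> < \<delta> \<Longrightarrow> norm (h (of_real t * cis \<phi>)) \<le> A * exp (B * t)"
  shows "borel_cont f \<theta> h A B"
  unfolding borel_cont_def
proof (intro exI conjI ballI)
  fix \<xi> assume "\<xi> \<in> open_sector \<theta> \<delta>"
  then obtain \<phi> where "\<bar>\<phi> - \<theta>\<bar> < \<delta>" "\<xi> = of_real (norm \<xi>) * cis \<phi>"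
    unfolding open_sector_def by blast
  then show "norm (h \<xi>) \<le> A * exp (B * norm \<xi>)" using assms(5)[of "norm \<xi>" \<phi>] by simp
qed (use assms in auto)

lemma continuous_on_ray:
  assumes "g holomorphic_on ball 0 r \<union> open_sector \<theta> \<delta>" "0 < r" "0 < \<delta>"
  shows "continuous_on {0..} (\<lambda>t. g (of_real t * cis \<theta>))"
proof -
  have "(\<lambda>t. of_real t * cis \<theta>) ` {0..} \<subseteq> ball 0 r \<union> open_sector \<theta> \<delta>"
  proof (rule image_subsetI)
    fix t :: real assume "t \<in> {0..}"
    then have "0 \<le> t" by simp
    then show "of_real t * cis \<theta> \<in> ball 0 r \<union> open_sector \<theta> \<delta>"
  proof (cases "t = 0")
    case False
    then have "of_real t * cis \<theta> \<in> open_sector \<theta> \<delta>"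
      using \<open>0 \<le> t\<close> assms(3) by (auto simp: open_sector_def norm_mult intro!: exI[of _ \<theta>])
    then show ?thesis by simp
  qed (use assms(2) in simp)
  qed
  then show ?thesis
    by (rule continuous_on_compose2[OF holomorphic_on_imp_continuous_on[OF assms(1)], rotated]) (intro continuous_intros)
qed

lemma is_one_sum_dir_binomial_tail:
  fixes a b d :: complex
  assumes b: "b \<noteq> 0" and d: "d \<noteq> 0" and nd: "norm d < norm b"
    and \<theta>: "cis \<theta> \<noteq> sgn (-d)" "cis \<theta> \<noteq> sgn (-b)"
  defines "K \<equiv> (1 - d / b) powr (-a)"
  shows "is_one_sum_dir (\<lambda>N. fact N * (-1 / d) ^ N * (K - (\<Sum>m\<le>N. pochhammer a m / fact m * (d / b) ^ m))) \<theta>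
           (\<lambda>x. K * laplace_dir (\<lambda>\<xi>. inverse (1 + \<xi> / d)) \<theta> x
              - laplace_dir (\<lambda>\<xi>. (1 + \<xi> / b) powr (-a) * inverse (1 + \<xi> / d)) \<theta> x)"
proof -
  obtain \<delta> \<eta> where \<delta>: "\<delta> > 0" and \<eta>: "\<eta> > 0"
    and sector: "\<And>t \<phi>. 0 \<le> t \<Longrightarrow> \<bar>\<phi> - \<theta>\<bar> < \<delta> \<Longrightarrow>
       \<eta> \<le> norm (1 + of_real t * cis \<phi> / d) \<and> \<eta> \<le> norm (1 + of_real t * cis \<phi> / b) \<and>
       1 + of_real t * cis \<phi> / b \<notin> \<real>\<^sub>\<le>\<^sub>0"
    using sector_avoiding_poles[OF b d \<theta>] by blast
  define g\<^sub>1 where "g\<^sub>1 = (\<lambda>\<xi>::complex. inverse (1 + \<xi> / d))"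
  define g\<^sub>2 where "g\<^sub>2 = (\<lambda>\<xi>::complex. (1 + \<xi> / b) powr (-a) * inverse (1 + \<xi> / d))"
  define U where "U = ball 0 (norm d) \<union> open_sector \<theta> \<delta>"
  define B where "B = norm a / norm b"
  define M where "M = exp (norm a * (\<bar>ln \<eta>\<bar> + pi)) / \<eta>"
  have poles: "1 + of_real t * cis \<phi> / d \<noteq> 0 \<and> 1 + of_real t * cis \<phi> / b \<notin> \<real>\<^sub>\<le>\<^sub>0"
    if "0 \<le> t" "\<bar>\<phi> - \<theta>\<bar> < \<delta>" for t \<phi>
    using sector[OF that] \<eta> by auto
  have holo: "g\<^sub>1 holomorphic_on U" "g\<^sub>2 holomorphic_on U"
    using binomial_factors_holomorphic[OF nd poles] unfolding g\<^sub>1_def g\<^sub>2_def U_def by blast+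
  have bounds: "norm (g\<^sub>1 (of_real t * cis \<phi>)) \<le> M * exp (B * t) \<and> norm (g\<^sub>2 (of_real t * cis \<phi>)) \<le> M * exp (B * t)"
    if t: "0 \<le> t" and \<phi>: "\<bar>\<phi> - \<theta>\<bar> < \<delta>" for t \<phi>
    using binomial_factors_bound[OF \<eta>, of "of_real t * cis \<phi>" d b a] sector[OF t \<phi>] t
    by (simp add: g\<^sub>1_def g\<^sub>2_def M_def B_def norm_mult)
  have "borel_cont (\<lambda>N. fact N * (-1 / d) ^ N * (K - (\<Sum>m\<le>N. pochhammer a m / fact m * (d / b) ^ m))) \<theta>
      (\<lambda>\<xi>. K * g\<^sub>1 \<xi> - g\<^sub>2 \<xi>) ((norm K + 1) * M) B"
  proof (rule borel_contI)
    show "(\<lambda>N. fact N * (-1 / d) ^ N * (K - (\<Sum>m\<le>N. pochhammer a m / fact m * (d / b) ^ m)) * \<zeta> ^ N / fact N)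
        sums (K * g\<^sub>1 \<zeta> - g\<^sub>2 \<zeta>)" if "\<zeta> \<in> ball 0 (norm d)" for \<zeta>
      using that unfolding K_def g\<^sub>1_def g\<^sub>2_def by (intro borel_transform_binomial_tail[OF b d nd]) simp
    show "norm (K * g\<^sub>1 (of_real t * cis \<phi>) - g\<^sub>2 (of_real t * cis \<phi>)) \<le> (norm K + 1) * M * exp (B * t)"
      if "0 \<le> t" "\<bar>\<phi> - \<theta>\<bar> < \<delta>" for t \<phi>
    proof -
      have "norm (K * g\<^sub>1 (of_real t * cis \<phi>) - g\<^sub>2 (of_real t * cis \<phi>))
          \<le> norm K * norm (g\<^sub>1 (of_real t * cis \<phi>)) + norm (g\<^sub>2 (of_real t * cis \<phi>))"
        using norm_triangle_ineq4 by (metis norm_mult)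
      also have "\<dots> \<le> norm K * (M * exp (B * t)) + M * exp (B * t)"
        using bounds[OF that] by (intro add_mono mult_left_mono) auto
      finally show ?thesis by (simp add: algebra_simps)
    qed
  qed (use d \<delta> holo in \<open>auto simp: U_def intro!: holomorphic_intros\<close>)
  then show ?thesis
    using continuous_on_ray[of _ "norm d" \<theta> \<delta>] holo d \<delta> bounds
    unfolding g\<^sub>1_def[symmetric] g\<^sub>2_def[symmetric] U_def
    by (intro is_one_sum_dir_lincomb[where M = M]) auto
qed

theorem mainTheorem6:
  fixes \<alpha>1 \<alpha>2 \<alpha>3 \<beta>1 \<beta>2 \<beta>3 :: complex
  assumes "\<beta>1 \<noteq> \<beta>2" "\<beta>1 \<noteq> \<beta>3" "\<beta>2 \<noteq> \<beta>3"
    and "norm (\<beta>3 - \<beta>1) < norm (\<beta>3 - \<beta>2)"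
    and "\<exists>k::int. k \<le> -4 \<and> \<alpha>3 - \<alpha>1 = of_int k"
    and "\<not> (\<exists>k::int. k \<ge> -1 \<and> \<alpha>2 - \<alpha>1 = of_int k)"
  defines "\<phi>hat \<equiv> (\<lambda>n::nat.
       let c = (-1) ^ n * pochhammer (\<alpha>1 - \<alpha>2 - 1) n / (\<beta>3 - \<beta>2) ^ n;
           Ft = (\<Sum>p. pochhammer (\<alpha>1 - \<alpha>2 - 1 + of_nat n) p / pochhammer (1 + of_nat n) p
                   * ((\<beta>3 - \<beta>1) / (\<beta>3 - \<beta>2)) ^ p)
       in c * Ft - c)"
    and "\<phi> \<equiv> (\<lambda>\<theta> x. ((\<beta>1 - \<beta>2) / (\<beta>3 - \<beta>2)) powr (\<alpha>2 - \<alpha>1 + 1)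
                   * laplace_dir (\<lambda>\<xi>. inverse (1 + \<xi> / (\<beta>3 - \<beta>1))) \<theta> x
               - laplace_dir (\<lambda>\<xi>. (1 + \<xi> / (\<beta>3 - \<beta>2)) powr (1 + \<alpha>2 - \<alpha>1)
                   * inverse (1 + \<xi> / (\<beta>3 - \<beta>1))) \<theta> x)"
  shows "one_summable \<phi>hat \<and>
         (\<forall>\<theta>. cis \<theta> \<noteq> sgn (\<beta>1 - \<beta>3) \<and> cis \<theta> \<noteq> sgn (\<beta>2 - \<beta>3) \<longrightarrow>
              is_one_sum_dir \<phi>hat \<theta> (\<phi> \<theta>))"
proof -
  define a b d where "a = \<alpha>1 - \<alpha>2 - 1" and "b = \<beta>3 - \<beta>2" and "d = \<beta>3 - \<beta>1"
  have b: "b \<noteq> 0" and d: "d \<noteq> 0" and nd: "norm d < norm b"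
    using assms(2-4) by (auto simp: b_def d_def)
  have a: "a \<noteq> - of_nat k" for k :: nat
  proof
    assume "a = - of_nat k"
    then have "\<alpha>2 - \<alpha>1 = of_int (int k - 1)" by (simp add: a_def algebra_simps)
    moreover have "int k - 1 \<ge> -1" by simp
    ultimately show False using assms(6) by blast
  qed
  have \<phi>hat_eq: "\<phi>hat = (\<lambda>N. fact N * (-1 / d) ^ N
      * ((1 - d / b) powr (-a) - (\<Sum>m\<le>N. pochhammer a m / fact m * (d / b) ^ m)))"
    unfolding \<phi>hat_def Let_def a_def[symmetric] b_def[symmetric] d_def[symmetric]
    using hypergeometric_as_binomial_tail[OF b d nd a] by presburger
  have \<phi>_eq: "\<phi> \<theta> = (\<lambda>x. (1 - d / b) powr (-a) * laplace_dir (\<lambda>\<xi>. inverse (1 + \<xi> / d)) \<theta> x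
      - laplace_dir (\<lambda>\<xi>. (1 + \<xi> / b) powr (-a) * inverse (1 + \<xi> / d)) \<theta> x)" for \<theta>
  proof -
    have "(\<beta>1 - \<beta>2) / (\<beta>3 - \<beta>2) = 1 - d / b" using b by (simp add: b_def d_def field_simps)
    moreover have "\<alpha>2 - \<alpha>1 + 1 = -a" "1 + \<alpha>2 - \<alpha>1 = -a" by (simp_all add: a_def)
    ultimately show ?thesis unfolding \<phi>_def b_def d_def by simp
  qed
  have sum: "is_one_sum_dir \<phi>hat \<theta> (\<phi> \<theta>)"
    if "cis \<theta> \<noteq> sgn (\<beta>1 - \<beta>3)" "cis \<theta> \<noteq> sgn (\<beta>2 - \<beta>3)" for \<theta>
    unfolding \<phi>hat_eq \<phi>_eq using that
    by (intro is_one_sum_dir_binomial_tail[OF b d nd]) (auto simp: b_def d_def)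
  then have "one_summable \<phi>hat"
    unfolding one_summable_def one_summable_dir_def is_one_sum_dir_def
    by (intro exI[of _ "{sgn (\<beta>1 - \<beta>3), sgn (\<beta>2 - \<beta>3)}"]) blast
  with sum show ?thesis by blast
qed
end
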